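(* Consider a two-asset G3M with weight $w\in(0,1)$ and fee parameter $\gamma\in(0,1)$, reserves $x_t,y_t>0$ and pool price $P_t=\frac{w}{1-w}\frac{y_t}{x_t}$, in which reserves change by continuous trades obeying $w\,\frac{dx}{x}+\gamma(1-w)\frac{dy}{y}=0$ when $dx<0$ (buying $X$ from the pool) and $\gamma w\frac{dx}{x}+(1-w)\frac{dy}{y}=0$ when $dx>0$ (selling $X$ to the pool). Let the reference price $S_t$ be continuous with $\gamma P_0\le S_0\le\gamma^{-1}P_0$, assume no noise traders, a frictionless reference market and continuous instantaneous arbitrage, and write $\ln P_t=\ln P_0+U_t-L_t$ and $Z_t=\ln(S_t/P_t)=\ln S_t-\ln P_0+L_t-U_t\in[\ln\gamma,-\ln\gamma]$, where $L_t,U_t$ are continuous non-decreasing with $L_0=U_0=0$, $L$ increasing only when $Z_t=\ln\gamma$ and $U$ only when $Z_t=-\ln\gamma$. Then: (a) $x_t$ and $y_t$ are predictable processes; (b) $x_t$ increases only when $Z_t=\ln\gamma$ and decreases only when $Z_t=-\ln\gamma$; $y_t$ increases only when $Z_t=-\ln\gamma$ and decreases only when $Z_t=\ln\gamma$; (c) $\ln x_t$ and $\ln y_t$ are continuous and of bounded variation on bounded subintervals of $[0,\infty)$; (d) $$d\ln x_t=\frac{1-w}{1-w+\gamma w}\,dL_t-\frac{\gamma(1-w)}{\gamma(1-w)+w}\,dU_t,\qquad d\ln y_t=\frac{w}{\gamma(1-w)+w}\,dU_t-\frac{\gamma w}{1-w+\gamma w}\,dL_t.$$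
   Context: $L_t$ (resp. $U_t$) is the cumulative decrease (resp. increase) of $\ln P_t$ due to arbitrage sales of $X$ to (resp. purchases of $X$ from) the pool. Time $t$ is a point of increase (decrease) of $x$ if there is $\delta>0$ with $x_{t-\delta_1}<x_{t+\delta_2}$ (resp. $>$) for all $\delta_1,\delta_2\in(0,\delta]$; $x$ "increases only when $Z_t=a$" if $Z_t=a$ at every point of increase. *)

theory Defs
  imports "HOL-Analysis.Analysis" "HOL-Probability.Probability"
begin

definition point_of_increase :: "(real \<Rightarrow> real) \<Rightarrow> real \<Rightarrow> bool" where
  "point_of_increase f t \<longleftrightarrow>
     (\<exists>d>0. \<forall>d1 d2. 0 < d1 \<and> d1 \<le> d \<and> 0 < d2 \<and> d2 \<le> d \<longrightarrow> f (t - d1) < f (t + d2))"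

definition point_of_decrease :: "(real \<Rightarrow> real) \<Rightarrow> real \<Rightarrow> bool" where
  "point_of_decrease f t \<longleftrightarrow>
     (\<exists>d>0. \<forall>d1 d2. 0 < d1 \<and> d1 \<le> d \<and> 0 < d2 \<and> d2 \<le> d \<longrightarrow> f (t - d1) > f (t + d2))"

definition increases_only_when :: "(real \<Rightarrow> real) \<Rightarrow> (real \<Rightarrow> real) \<Rightarrow> real \<Rightarrow> bool" where
  "increases_only_when f Z a \<longleftrightarrow> (\<forall>t>0. point_of_increase f t \<longrightarrow> Z t = a)"

definition decreases_only_when :: "(real \<Rightarrow> real) \<Rightarrow> (real \<Rightarrow> real) \<Rightarrow> real \<Rightarrow> bool" where
  "decreases_only_when f Z a \<longleftrightarrow> (\<forall>t>0. point_of_decrease f t \<longrightarrow> Z t = a)"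

definition bounded_variation_on :: "(real \<Rightarrow> real) \<Rightarrow> real \<Rightarrow> real \<Rightarrow> bool" where
  "bounded_variation_on f a b \<longleftrightarrow>
     (\<exists>B. \<forall>(n::nat) (p::nat \<Rightarrow> real).
        (\<forall>i<n. a \<le> p i \<and> p i \<le> p (Suc i) \<and> p (Suc i) \<le> b) \<longrightarrow>
        (\<Sum>i<n. \<bar>f (p (Suc i)) - f (p i)\<bar>) \<le> B)"

definition predictable_sigma :: "(real \<Rightarrow> 'a measure) \<Rightarrow> 'a set \<Rightarrow> (real \<times> 'a) measure" where
  "predictable_sigma F \<Omega> = sigma ({0..} \<times> \<Omega>)
     ({{0} \<times> A | A. A \<in> sets (F 0)} \<union>
      {{s<..t} \<times> A | s t A. 0 \<le> s \<and> s \<le> t \<and> A \<in> sets (F s)})"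

definition predictable :: "(real \<Rightarrow> 'a measure) \<Rightarrow> 'a set \<Rightarrow> (real \<Rightarrow> 'a \<Rightarrow> real) \<Rightarrow> bool" where
  "predictable F \<Omega> X \<longleftrightarrow> (\<lambda>(t, \<omega>). X t \<omega>) \<in> borel_measurable (predictable_sigma F \<Omega>)"

end

theory Submission
  imports Defs
begin

(*
  In log coordinates the reserves are linear in the two regulators:
  ln x = ln x0 + alpha L - beta U and ln y = ln y0 + beta' U - alpha' L with positive
  coefficients.  Since L and U are nondecreasing, a point of increase of x is one of L and a
  point of decrease of x is one of U (and symmetrically for y); continuity, bounded variation
  and (d) are immediate.

  For (a), Z = (ln S - ln P0) + L - U is the two-sided Skorokhod reflection of the continuous
  adapted driver ln S - ln P0 in [ln gamma, - ln gamma].  Hence L t - U t is an explicit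
  sup/inf functional of the driver on [0, t].  On intervals shorter than a modulus of
  continuity of Z for the band width, Z cannot reach both boundaries, so only one regulator
  moves there; thus L t is the limit of the sums of the positive increments of L - U along
  finer and finer partitions of [0, t].  So L and U are adapted, x and y are continuous and
  adapted, and such processes are predictable, being pointwise limits of their
  discretisations at the grid points to the left.
*)

section \<open>Points of increase and bounded variation\<close>

lemma last_time_in_closed:
  fixes f :: "real \<Rightarrow> real"
  assumes cont: "continuous_on {s..t} f" and C: "closed C" and u: "u \<in> {s..t}" "f u \<in> C"
  obtains v where "v \<in> {s..t}" "f v \<in> C" "\<And>u. v < u \<Longrightarrow> u \<le> t \<Longrightarrow> f u \<notin> C"
proof -
  define K where "K = {s..t} \<inter> f -` C"
  have "closed K"
    unfolding K_def using cont C by (intro continuous_closed_preimage) auto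
  moreover have "K \<noteq> {}" and K_bdd: "bdd_above K"
    using u by (auto simp: K_def intro: bdd_aboveI[of _ t])
  ultimately have "Sup K \<in> K"
    using closed_contains_Sup by blast
  then have Sup: "Sup K \<in> {s..t}" "f (Sup K) \<in> C"
    by (simp_all add: K_def)
  show ?thesis
  proof (rule that[OF Sup])
    fix v
    assume v: "Sup K < v" "v \<le> t"
    have "v \<notin> K"
      using v(1) cSup_upper[OF _ K_bdd, of v] by linarith
    then show "f v \<notin> C"
      using v Sup(1) by (simp add: K_def)
  qed
qed

lemma continuous_mono_eq_if_no_point_of_increase:
  fixes f :: "real \<Rightarrow> real"
  assumes "s \<le> t" and cont: "continuous_on {s..t} f" and mono: "mono_on {s..t} f"
    and no_incr: "\<And>u. s < u \<Longrightarrow> u < t \<Longrightarrow> \<not> point_of_increase f u"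
  shows "f t = f s"
proof (rule ccontr)
  assume "f t \<noteq> f s"
  moreover have "f s \<le> f t"
    using mono \<open>s \<le> t\<close> by (auto intro: mono_onD)
  ultimately have "f s < f t" by simp
  define c where "c = (f s + f t) / 2"
  have c: "f s < c" "c < f t"
    using \<open>f s < f t\<close> by (auto simp: c_def)
  \<comment> \<open>the last time at which f is at most c is a point of increase\<close>
  obtain \<tau> where \<tau>: "\<tau> \<in> {s..t}" "f \<tau> \<in> {..c}"
    and after_\<tau>: "\<And>u. \<tau> < u \<Longrightarrow> u \<le> t \<Longrightarrow> f u \<notin> {..c}"
    by (rule last_time_in_closed[OF cont closed_atMost[of c], where u = s]) (use \<open>s \<le> t\<close> c in auto)
  have after: "c < f u" if "\<tau> < u" "u \<le> t" for u
    using after_\<tau>[OF that] by simp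
  obtain u where u: "u \<in> {s..t}" "f u = c"
    using IVT'[of f s c t] c \<open>s \<le> t\<close> cont by auto
  have "u \<le> \<tau>"
    using after[of u] u by (cases "u \<le> \<tau>") auto
  moreover have "u \<noteq> s"
    using u c by auto
  ultimately have "s < \<tau>"
    using u by simp
  moreover have "\<tau> < t"
    using \<tau> c by (cases "\<tau> = t") auto
  moreover have "point_of_increase f \<tau>"
    unfolding point_of_increase_def
  proof (intro exI[of _ "min (\<tau> - s) (t - \<tau>)"] conjI allI impI)
    show "0 < min (\<tau> - s) (t - \<tau>)"
      using \<open>s < \<tau>\<close> \<open>\<tau> < t\<close> by simp
    fix d1 d2
    assume d: "0 < d1 \<and> d1 \<le> min (\<tau> - s) (t - \<tau>) \<and> 0 < d2 \<and> d2 \<le> min (\<tau> - s) (t - \<tau>)"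
    have "f (\<tau> - d1) \<le> f \<tau>"
      using d \<tau> by (intro mono_onD[OF mono]) auto
    moreover have "c < f (\<tau> + d2)"
      using d by (intro after) auto
    ultimately show "f (\<tau> - d1) < f (\<tau> + d2)"
      using \<tau>(2) by simp
  qed
  ultimately show False
    using no_incr by blast
qed

lemma point_of_increase_transfer:
  fixes f g :: "real \<Rightarrow> real"
  assumes incr: "point_of_increase f t" and "0 < t"
    and transfer: "\<And>s u. 0 \<le> s \<Longrightarrow> s < u \<Longrightarrow> f s < f u \<Longrightarrow> g s < g u"
  shows "point_of_increase g t"
proof -
  obtain d where "0 < d" and d: "\<And>d1 d2. 0 < d1 \<Longrightarrow> d1 \<le> d \<Longrightarrow> 0 < d2 \<Longrightarrow> d2 \<le> d \<Longrightarrow> f (t - d1) < f (t + d2)"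
    using incr unfolding point_of_increase_def by blast
  show ?thesis
    unfolding point_of_increase_def
  proof (intro exI[of _ "min d t"] conjI allI impI)
    show "0 < min d t"
      using \<open>0 < d\<close> \<open>0 < t\<close> by simp
    fix d1 d2
    assume "0 < d1 \<and> d1 \<le> min d t \<and> 0 < d2 \<and> d2 \<le> min d t"
    then show "g (t - d1) < g (t + d2)"
      using transfer[of "t - d1" "t + d2"] d[of d1 d2] by simp
  qed
qed

lemma point_of_decrease_transfer:
  fixes f g :: "real \<Rightarrow> real"
  assumes decr: "point_of_decrease f t" and "0 < t"
    and transfer: "\<And>s u. 0 \<le> s \<Longrightarrow> s < u \<Longrightarrow> f u < f s \<Longrightarrow> g s < g u"
  shows "point_of_increase g t"
proof -
  obtain d where "0 < d" and d: "\<And>d1 d2. 0 < d1 \<Longrightarrow> d1 \<le> d \<Longrightarrow> 0 < d2 \<Longrightarrow> d2 \<le> d \<Longrightarrow> f (t + d2) < f (t - d1)"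
    using decr unfolding point_of_decrease_def by blast
  show ?thesis
    unfolding point_of_increase_def
  proof (intro exI[of _ "min d t"] conjI allI impI)
    show "0 < min d t"
      using \<open>0 < d\<close> \<open>0 < t\<close> by simp
    fix d1 d2
    assume "0 < d1 \<and> d1 \<le> min d t \<and> 0 < d2 \<and> d2 \<le> min d t"
    then show "g (t - d1) < g (t + d2)"
      using transfer[of "t - d1" "t + d2"] d[of d1 d2] by simp
  qed
qed

lemma increases_only_when_transfer:
  assumes "increases_only_when g Z a"
    and "\<And>s u. 0 \<le> s \<Longrightarrow> s < u \<Longrightarrow> f s < f u \<Longrightarrow> g s < g u"
  shows "increases_only_when f Z a"
  using assms point_of_increase_transfer[of f _ g] unfolding increases_only_when_def by blast

lemma decreases_only_when_transfer:
  assumes "increases_only_when g Z a"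
    and "\<And>s u. 0 \<le> s \<Longrightarrow> s < u \<Longrightarrow> f u < f s \<Longrightarrow> g s < g u"
  shows "decreases_only_when f Z a"
  using assms point_of_decrease_transfer[of f _ g]
  unfolding increases_only_when_def decreases_only_when_def by blast

lemma increases_only_when_cong:
  "(\<And>t. 0 < t \<Longrightarrow> Z t = Z' t) \<Longrightarrow> increases_only_when f Z a \<longleftrightarrow> increases_only_when f Z' a"
  unfolding increases_only_when_def by auto

lemma bounded_variation_on_mono:
  fixes f :: "real \<Rightarrow> real"
  assumes mono: "mono_on {a..b} f"
  shows "bounded_variation_on f a b"
  unfolding bounded_variation_on_def
proof (intro exI[of _ "\<bar>f b - f a\<bar>"] allI impI)
  fix n :: nat and p :: "nat \<Rightarrow> real"
  assume p: "\<forall>i<n. a \<le> p i \<and> p i \<le> p (Suc i) \<and> p (Suc i) \<le> b"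
  show "(\<Sum>i<n. \<bar>f (p (Suc i)) - f (p i)\<bar>) \<le> \<bar>f b - f a\<bar>"
  proof (cases n)
    case (Suc m)
    have "f (p i) \<le> f (p (Suc i))" if "i < n" for i
      using p that by (intro mono_onD[OF mono]) auto
    then have "(\<Sum>i<n. \<bar>f (p (Suc i)) - f (p i)\<bar>) = (\<Sum>i<n. f (p (Suc i)) - f (p i))"
      by (intro sum.cong refl abs_of_nonneg) simp_all
    also have "\<dots> = f (p n) - f (p 0)"
      by (rule sum_lessThan_telescope)
    also have "\<dots> \<le> f b - f a"
      using p[rule_format, of 0] p[rule_format, of m] Suc
      by (intro diff_mono mono_onD[OF mono]) auto
    finally show ?thesis by simp
  qed simp
qed

lemma bounded_variation_on_linear_combination:
  fixes f g h :: "real \<Rightarrow> real"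
  assumes "bounded_variation_on f a b" and "bounded_variation_on g a b"
    and h: "\<And>t. t \<in> {a..b} \<Longrightarrow> h t = c + p * f t + q * g t"
  shows "bounded_variation_on h a b"
proof -
  obtain Bf where
    Bf: "\<And>n r. \<forall>i<n. a \<le> r i \<and> r i \<le> r (Suc i) \<and> r (Suc i) \<le> b \<Longrightarrow> (\<Sum>i<n. \<bar>f (r (Suc i)) - f (r i)\<bar>) \<le> Bf"
    using assms(1) unfolding bounded_variation_on_def by blast
  obtain Bg where
    Bg: "\<And>n r. \<forall>i<n. a \<le> r i \<and> r i \<le> r (Suc i) \<and> r (Suc i) \<le> b \<Longrightarrow> (\<Sum>i<n. \<bar>g (r (Suc i)) - g (r i)\<bar>) \<le> Bg"
    using assms(2) unfolding bounded_variation_on_def by blast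
  show ?thesis
    unfolding bounded_variation_on_def
  proof (intro exI[of _ "\<bar>p\<bar> * Bf + \<bar>q\<bar> * Bg"] allI impI)
    fix n :: nat and r :: "nat \<Rightarrow> real"
    assume r: "\<forall>i<n. a \<le> r i \<and> r i \<le> r (Suc i) \<and> r (Suc i) \<le> b"
    have "\<bar>h (r (Suc i)) - h (r i)\<bar> \<le> \<bar>p\<bar> * \<bar>f (r (Suc i)) - f (r i)\<bar> + \<bar>q\<bar> * \<bar>g (r (Suc i)) - g (r i)\<bar>"
      if "i < n" for i
    proof -
      have "h (r (Suc i)) - h (r i) = p * (f (r (Suc i)) - f (r i)) + q * (g (r (Suc i)) - g (r i))"
        using h[of "r i"] h[of "r (Suc i)"] r that by (auto simp: algebra_simps)
      then show ?thesis
        using abs_triangle_ineq[of "p * _" "q * _"] by (simp add: abs_mult)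
    qed
    then have "(\<Sum>i<n. \<bar>h (r (Suc i)) - h (r i)\<bar>)
        \<le> (\<Sum>i<n. \<bar>p\<bar> * \<bar>f (r (Suc i)) - f (r i)\<bar> + \<bar>q\<bar> * \<bar>g (r (Suc i)) - g (r i)\<bar>)"
      by (intro sum_mono) simp
    also have "\<dots> = \<bar>p\<bar> * (\<Sum>i<n. \<bar>f (r (Suc i)) - f (r i)\<bar>) + \<bar>q\<bar> * (\<Sum>i<n. \<bar>g (r (Suc i)) - g (r i)\<bar>)"
      by (simp add: sum.distrib sum_distrib_left)
    also have "\<dots> \<le> \<bar>p\<bar> * Bf + \<bar>q\<bar> * Bg"
      using Bf[OF r] Bg[OF r] by (intro add_mono mult_left_mono) auto
    finally show "(\<Sum>i<n. \<bar>h (r (Suc i)) - h (r i)\<bar>) \<le> \<bar>p\<bar> * Bf + \<bar>q\<bar> * Bg" .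
  qed
qed

lemma log_linear_path_properties:
  fixes f G H Z :: "real \<Rightarrow> real"
  assumes f_pos: "\<And>t. 0 \<le> t \<Longrightarrow> 0 < f t"
    and ln_f: "\<And>t. 0 \<le> t \<Longrightarrow> ln (f t) = c + p * G t - q * H t"
    and "0 < p" and "0 < q"
    and G_cont: "continuous_on {0..} G" and G_mono: "mono_on {0..} G"
    and H_cont: "continuous_on {0..} H" and H_mono: "mono_on {0..} H"
    and G_only: "increases_only_when G Z a" and H_only: "increases_only_when H Z b"
  shows "increases_only_when f Z a" and "decreases_only_when f Z b"
    and "continuous_on {0..} (\<lambda>t. ln (f t))"
    and "\<And>r s. 0 \<le> r \<Longrightarrow> bounded_variation_on (\<lambda>t. ln (f t)) r s"
proof -
  have ln_less: "ln (f s) < ln (f u) \<longleftrightarrow> f s < f u" if "0 \<le> s" "0 \<le> u" for s u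
    using f_pos that by simp
  have G_incr: "G s < G u" if "0 \<le> s" "s < u" "f s < f u" for s u
  proof -
    have "q * H s \<le> q * H u"
      using that \<open>0 < q\<close> by (intro mult_left_mono mono_onD[OF H_mono]) auto
    moreover have "ln (f s) < ln (f u)"
      using ln_less[of s u] that by simp
    ultimately have "p * G s < p * G u"
      using ln_f[of s] ln_f[of u] that by simp
    then show ?thesis
      using \<open>0 < p\<close> by simp
  qed
  have H_incr: "H s < H u" if "0 \<le> s" "s < u" "f u < f s" for s u
  proof -
    have "p * G s \<le> p * G u"
      using that \<open>0 < p\<close> by (intro mult_left_mono mono_onD[OF G_mono]) auto
    moreover have "ln (f u) < ln (f s)"
      using ln_less[of u s] that by simp
    ultimately have "q * H s < q * H u"
      using ln_f[of s] ln_f[of u] that by simp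
    then show ?thesis
      using \<open>0 < q\<close> by simp
  qed
  show "increases_only_when f Z a"
    by (rule increases_only_when_transfer[OF G_only G_incr])
  show "decreases_only_when f Z b"
    by (rule decreases_only_when_transfer[OF H_only H_incr])
  have "continuous_on {0..} (\<lambda>t. c + p * G t - q * H t)"
    using G_cont H_cont by (intro continuous_intros)
  then show "continuous_on {0..} (\<lambda>t. ln (f t))"
    by (rule continuous_on_cong[THEN iffD1, OF refl, rotated]) (simp add: ln_f)
  fix r s :: real
  assume "0 \<le> r"
  then have "bounded_variation_on G r s" "bounded_variation_on H r s"
    by (auto intro!: bounded_variation_on_mono mono_on_subset[OF G_mono] mono_on_subset[OF H_mono])
  then show "bounded_variation_on (\<lambda>t. ln (f t)) r s"
    by (rule bounded_variation_on_linear_combination[where c = c and p = p and q = "- q"])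
      (use \<open>0 \<le> r\<close> ln_f in simp)
qed

section \<open>The two-sided Skorokhod problem\<close>

lemma clamp_real:
  fixes s t q :: real
  assumes "s \<le> t"
  shows "clamp s t q = max s (min t q)"
  unfolding clamp_def Basis_real_def using assms by auto

lemma Inf_image_eq_INF_rat_clamp:
  fixes \<phi> :: "real \<Rightarrow> real"
  assumes "s \<le> t" and cont: "continuous_on {s..t} \<phi>"
  shows "Inf (\<phi> ` {s..t}) = (INF q\<in>\<rat>. \<phi> (clamp s t q))"
proof (rule antisym)
  have clamp_in: "clamp s t q \<in> {s..t}" for q
    using \<open>s \<le> t\<close> by (simp add: clamp_real)
  have "bdd_below (\<phi> ` {s..t})"
    using compact_continuous_image[OF cont compact_Icc] by (simp add: bounded_imp_bdd_below compact_imp_bounded)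
  then show "Inf (\<phi> ` {s..t}) \<le> (INF q\<in>\<rat>. \<phi> (clamp s t q))"
    using clamp_in by (intro cINF_greatest) (auto intro!: cInf_lower)
  have bdd: "bdd_below ((\<lambda>q. \<phi> (clamp s t q)) ` \<rat>)"
    using \<open>bdd_below (\<phi> ` {s..t})\<close> clamp_in by (force simp: bdd_below_def)
  obtain u where u: "u \<in> {s..t}" "\<And>v. v \<in> {s..t} \<Longrightarrow> \<phi> u \<le> \<phi> v"
    using continuous_attains_inf[OF compact_Icc _ cont] \<open>s \<le> t\<close> by auto
  have "(INF q\<in>\<rat>. \<phi> (clamp s t q)) \<le> \<phi> u + e" if "0 < e" for e
  proof -
    obtain d where "0 < d" and d: "\<And>v. v \<in> {s..t} \<Longrightarrow> dist v u < d \<Longrightarrow> dist (\<phi> v) (\<phi> u) < e"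
      using cont u(1) \<open>0 < e\<close> unfolding continuous_on_iff by metis
    obtain q where "q \<in> \<rat>" "u < q" "q < u + d"
      using Rats_dense_in_real[of u "u + d"] \<open>0 < d\<close> by auto
    then have "dist (clamp s t q) u < d"
      using u(1) \<open>s \<le> t\<close> by (auto simp: clamp_real dist_real_def)
    then have "dist (\<phi> (clamp s t q)) (\<phi> u) < e"
      by (rule d[OF clamp_in])
    then have "\<phi> (clamp s t q) < \<phi> u + e"
      by (simp add: dist_real_def abs_less_iff)
    then show ?thesis
      using cINF_lower[OF bdd \<open>q \<in> \<rat>\<close>] by linarith
  qed
  then have "(INF q\<in>\<rat>. \<phi> (clamp s t q)) \<le> \<phi> u"
    by (rule field_le_epsilon)
  also have "\<phi> u = Inf (\<phi> ` {s..t})"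
    using u by (intro cInf_eq_minimum[symmetric]) auto
  finally show "(INF q\<in>\<rat>. \<phi> (clamp s t q)) \<le> Inf (\<phi> ` {s..t})" .
qed

lemma grid_point_in: "0 \<le> t \<Longrightarrow> i \<le> n \<Longrightarrow> t * real i / real n \<in> {0..t}"
  by (cases "n = 0") (auto simp: field_simps mult_left_mono)

definition positive_increments :: "(real \<Rightarrow> real) \<Rightarrow> real \<Rightarrow> nat \<Rightarrow> real" where
  "positive_increments N t n = (\<Sum>i<n. max 0 (N (t * real (Suc i) / real n) - N (t * real i / real n)))"

text \<open>The two-sided Skorokhod map: by two_sided_reflection.net_eq_skorokhod_net it computes
  L t - U t from X.  The extrema over [0, t] are taken along clamped rational times, so that they
  are countable.\<close>
definition skorokhod_net :: "(real \<Rightarrow> real) \<Rightarrow> real \<Rightarrow> real \<Rightarrow> real \<Rightarrow> real" where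
  "skorokhod_net X a b t = max (min 0 (INF q\<in>\<rat>. b - X (clamp 0 t q)))
     (SUP q\<in>\<rat>. min (a - X (clamp 0 t q)) (INF q'\<in>\<rat>. b - X (clamp (clamp 0 t q) t q')))"

locale two_sided_reflection =
  fixes X L U :: "real \<Rightarrow> real" and a b :: real
  assumes a_less_b: "a < b"
    and X_cont: "continuous_on {0..} X"
    and L_cont: "continuous_on {0..} L" and U_cont: "continuous_on {0..} U"
    and L_mono: "mono_on {0..} L" and U_mono: "mono_on {0..} U"
    and L_0: "L 0 = 0" and U_0: "U 0 = 0"
    and in_band: "\<And>t. 0 \<le> t \<Longrightarrow> a \<le> X t + L t - U t \<and> X t + L t - U t \<le> b"
    and L_only: "increases_only_when L (\<lambda>t. X t + L t - U t) a"
    and U_only: "increases_only_when U (\<lambda>t. X t + L t - U t) b"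
begin

definition Z :: "real \<Rightarrow> real" where
  "Z t = X t + L t - U t"

lemma Z_cont: "continuous_on {0..} Z"
  unfolding Z_def[abs_def] using X_cont L_cont U_cont by (intro continuous_intros)

lemma L_le: "0 \<le> s \<Longrightarrow> s \<le> t \<Longrightarrow> L s \<le> L t"
  using L_mono by (auto intro: mono_onD)

lemma U_le: "0 \<le> s \<Longrightarrow> s \<le> t \<Longrightarrow> U s \<le> U t"
  using U_mono by (auto intro: mono_onD)

lemma L_eq_if_not_at_a:
  assumes "0 \<le> s" "s \<le> t" and not_a: "\<And>u. s < u \<Longrightarrow> u < t \<Longrightarrow> Z u \<noteq> a"
  shows "L t = L s"
proof (rule continuous_mono_eq_if_no_point_of_increase[of s t L])
  show "continuous_on {s..t} L" "mono_on {s..t} L"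
    using assms(1) by (auto intro: continuous_on_subset[OF L_cont] mono_on_subset[OF L_mono])
  show "\<not> point_of_increase L u" if "s < u" "u < t" for u
    using L_only not_a[OF that] that \<open>0 \<le> s\<close> unfolding increases_only_when_def Z_def by auto
qed fact

lemma U_eq_if_not_at_b:
  assumes "0 \<le> s" "s \<le> t" and not_b: "\<And>u. s < u \<Longrightarrow> u < t \<Longrightarrow> Z u \<noteq> b"
  shows "U t = U s"
proof (rule continuous_mono_eq_if_no_point_of_increase[of s t U])
  show "continuous_on {s..t} U" "mono_on {s..t} U"
    using assms(1) by (auto intro: continuous_on_subset[OF U_cont] mono_on_subset[OF U_mono])
  show "\<not> point_of_increase U u" if "s < u" "u < t" for u
    using U_only not_b[OF that] that \<open>0 \<le> s\<close> unfolding increases_only_when_def Z_def by auto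
qed fact

definition gap :: "real \<Rightarrow> real \<Rightarrow> real" where
  "gap s t = Inf ((\<lambda>u. b - X u) ` {s..t})"

lemma gap_le:
  assumes "0 \<le> s" "u \<in> {s..t}"
  shows "gap s t \<le> b - X u"
proof -
  have "continuous_on {s..t} (\<lambda>u. b - X u)"
    using assms(1) by (intro continuous_intros continuous_on_subset[OF X_cont]) auto
  then have "compact ((\<lambda>u. b - X u) ` {s..t})"
    by (rule compact_continuous_image[OF _ compact_Icc])
  then have "bdd_below ((\<lambda>u. b - X u) ` {s..t})"
    by (simp add: bounded_imp_bdd_below compact_imp_bounded)
  then show ?thesis
    unfolding gap_def using assms(2) by (intro cInf_lower) auto
qed

lemma le_gap: "s \<le> t \<Longrightarrow> (\<And>u. u \<in> {s..t} \<Longrightarrow> c \<le> b - X u) \<Longrightarrow> c \<le> gap s t"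
  unfolding gap_def by (rule cInf_greatest) auto

lemma min_net_gap_le:
  assumes "0 \<le> s" "s \<le> t"
  shows "min (L s - U s) (gap s t) \<le> L t - U t"
proof (cases "\<exists>u\<in>{s..t}. Z u = b")
  case False
  then have "U t = U s"
    using assms by (intro U_eq_if_not_at_b) auto
  then show ?thesis
    using L_le[OF assms] by simp
next
  case True
  then obtain u where u: "u \<in> {s..t}" "Z u \<in> {b}"
    by auto
  have "continuous_on {s..t} Z"
    using assms(1) by (auto intro: continuous_on_subset[OF Z_cont])
  then obtain v where v: "v \<in> {s..t}" "Z v \<in> {b}" and after: "\<And>u. v < u \<Longrightarrow> u \<le> t \<Longrightarrow> Z u \<notin> {b}"
    using last_time_in_closed[OF \<open>continuous_on {s..t} Z\<close> closed_singleton u] by blast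
  have "U t = U v"
    using v after assms by (intro U_eq_if_not_at_b) auto
  moreover have "L v \<le> L t"
    using v(1) assms(1) by (intro L_le) auto
  moreover have "gap s t \<le> b - X v"
    using v(1) assms(1) by (intro gap_le)
  ultimately show ?thesis
    using v(2) by (auto simp: Z_def)
qed

lemma min_le_net:
  assumes "0 \<le> s" "s \<le> t"
  shows "min (a - X s) (gap s t) \<le> L t - U t"
  using min_net_gap_le[OF assms] in_band[OF assms(1)] by linarith

lemma net_le_min_gap_if_not_at_a:
  assumes "0 \<le> t" and not_a: "\<And>u. u \<in> {0..t} \<Longrightarrow> Z u \<noteq> a"
  shows "L t - U t \<le> min 0 (gap 0 t)"
proof -
  have "L t = 0"
    using assms L_0 by (subst L_eq_if_not_at_a[of 0]) auto
  then have L_zero: "L u = 0" if "u \<in> {0..t}" for u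
    using L_le[of 0 u] L_le[of u t] L_0 that by auto
  have "L t - U t \<le> b - X u" if "u \<in> {0..t}" for u
    using in_band[of u] U_le[of u t] L_zero[OF that] \<open>L t = 0\<close> that by auto
  then have "L t - U t \<le> gap 0 t"
    using \<open>0 \<le> t\<close> by (intro le_gap)
  moreover have "L t - U t \<le> 0"
    using \<open>L t = 0\<close> U_le[of 0 t] U_0 \<open>0 \<le> t\<close> by simp
  ultimately show ?thesis
    by simp
qed

lemma net_le_after_last_a:
  assumes r: "r \<in> {0..t}" "Z r = a" and after: "\<And>u. r < u \<Longrightarrow> u \<le> t \<Longrightarrow> Z u \<noteq> a"
  shows "L t - U t \<le> a - X r" and "\<And>s. r \<le> s \<Longrightarrow> s \<le> t \<Longrightarrow> L t - U t \<le> gap s t"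
proof -
  have L_r: "L u = L r" if "u \<in> {r..t}" for u
    using that r after by (intro L_eq_if_not_at_a) auto
  have net_le: "L t - U t \<le> L u - U u" if "u \<in> {r..t}" for u
    using L_r[OF that] L_r[of t] U_le[of u t] r that by auto
  show "L t - U t \<le> a - X r"
    using net_le[of r] r by (simp add: Z_def)
  show "L t - U t \<le> gap s t" if "r \<le> s" "s \<le> t" for s
  proof (rule le_gap[OF that(2)])
    fix u
    assume "u \<in> {s..t}"
    then have "u \<in> {r..t}" "0 \<le> u"
      using that r by auto
    then show "L t - U t \<le> b - X u"
      using net_le[of u] in_band[of u] by linarith
  qed
qed

lemma net_le_SUP_if_at_a:
  assumes "0 \<le> t" and "u \<in> {0..t}" "Z u = a"
  shows "L t - U t \<le> (SUP q\<in>\<rat>. min (a - X (clamp 0 t q)) (gap (clamp 0 t q) t))"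
proof -
  have "continuous_on {0..t} Z"
    by (rule continuous_on_subset[OF Z_cont]) auto
  then obtain r where r: "r \<in> {0..t}" "Z r \<in> {a}" and after: "\<And>u. r < u \<Longrightarrow> u \<le> t \<Longrightarrow> Z u \<notin> {a}"
    using last_time_in_closed[OF _ closed_singleton \<open>u \<in> {0..t}\<close>] \<open>Z u = a\<close> by blast
  then have net_le_X: "L t - U t \<le> a - X r"
    and net_le_gap: "\<And>s. r \<le> s \<Longrightarrow> s \<le> t \<Longrightarrow> L t - U t \<le> gap s t"
    using net_le_after_last_a[of r t] by auto
  have bdd: "bdd_above ((\<lambda>q. min (a - X (clamp 0 t q)) (gap (clamp 0 t q) t)) ` \<rat>)"
    using min_le_net \<open>0 \<le> t\<close> by (intro bdd_aboveI[of _ "L t - U t"]) (auto simp: clamp_real)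
  show ?thesis
  proof (rule field_le_epsilon)
    fix e :: real
    assume "0 < e"
    then obtain d where "0 < d" and d: "\<And>v. v \<in> {0..} \<Longrightarrow> dist v r < d \<Longrightarrow> dist (X v) (X r) < e"
      using X_cont r(1) unfolding continuous_on_iff by (metis atLeastAtMost_iff atLeast_iff)
    obtain q where "q \<in> \<rat>" "r < q" "q < r + d"
      using Rats_dense_in_real[of r "r + d"] \<open>0 < d\<close> by auto
    define s where "s = clamp 0 t q"
    have s: "r \<le> s" "s \<le> t" "dist s r < d"
      using r \<open>r < q\<close> \<open>q < r + d\<close> by (auto simp: s_def clamp_real dist_real_def)
    then have "a - X r - e \<le> a - X s"
      using d[of s] r by (auto simp: dist_real_def)
    then have "L t - U t - e \<le> min (a - X s) (gap s t)"
      using net_le_X net_le_gap[OF s(1,2)] \<open>0 < e\<close> by linarith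
    also have "\<dots> \<le> (SUP q\<in>\<rat>. min (a - X (clamp 0 t q)) (gap (clamp 0 t q) t))"
      unfolding s_def by (rule cSUP_upper[OF \<open>q \<in> \<rat>\<close> bdd])
    finally show "L t - U t \<le> (SUP q\<in>\<rat>. min (a - X (clamp 0 t q)) (gap (clamp 0 t q) t)) + e"
      by linarith
  qed
qed

lemma net_eq_sup_gap:
  assumes "0 \<le> t"
  shows "L t - U t = max (min 0 (gap 0 t)) (SUP q\<in>\<rat>. min (a - X (clamp 0 t q)) (gap (clamp 0 t q) t))"
proof (rule antisym)
  show "L t - U t \<le> max (min 0 (gap 0 t)) (SUP q\<in>\<rat>. min (a - X (clamp 0 t q)) (gap (clamp 0 t q) t))"
    using net_le_min_gap_if_not_at_a[OF assms] net_le_SUP_if_at_a[OF assms] by force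
  have "min 0 (gap 0 t) \<le> L t - U t"
    using min_net_gap_le[of 0 t] assms L_0 U_0 by simp
  moreover have "(SUP q\<in>\<rat>. min (a - X (clamp 0 t q)) (gap (clamp 0 t q) t)) \<le> L t - U t"
    using assms by (intro cSUP_least min_le_net) (auto simp: clamp_real)
  ultimately show "max (min 0 (gap 0 t)) (SUP q\<in>\<rat>. min (a - X (clamp 0 t q)) (gap (clamp 0 t q) t)) \<le> L t - U t"
    by simp
qed

lemma gap_eq_INF_rat:
  assumes "0 \<le> s" "s \<le> t"
  shows "gap s t = (INF q\<in>\<rat>. b - X (clamp s t q))"
  unfolding gap_def using assms
  by (intro Inf_image_eq_INF_rat_clamp continuous_intros continuous_on_subset[OF X_cont]) auto

lemma net_eq_skorokhod_net:
  assumes "0 \<le> t"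
  shows "L t - U t = skorokhod_net X a b t"
proof -
  have "clamp 0 t q \<in> {0..t}" for q
    using assms by (simp add: clamp_real)
  then show ?thesis
    unfolding net_eq_sup_gap[OF assms] skorokhod_net_def using assms
    by (simp add: gap_eq_INF_rat)
qed

lemma positive_increment_eq_L_increment:
  assumes "0 \<le> s" "s \<le> u"
    and short: "\<And>v w. v \<in> {s..u} \<Longrightarrow> w \<in> {s..u} \<Longrightarrow> \<bar>Z v - Z w\<bar> < b - a"
  shows "max 0 ((L u - U u) - (L s - U s)) = L u - L s"
proof (cases "\<exists>v. s < v \<and> v < u \<and> Z v = a")
  case True
  then obtain v where v: "s < v" "v < u" "Z v = a"
    by blast
  have "U u = U s"
  proof (rule U_eq_if_not_at_b[OF assms(1,2)])
    fix w
    assume "s < w" "w < u"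
    then show "Z w \<noteq> b"
      using short[of w v] v by auto
  qed
  then show ?thesis
    using L_le[OF assms(1,2)] by simp
next
  case False
  then have "L u = L s"
    using assms(1,2) by (intro L_eq_if_not_at_a) auto
  then show ?thesis
    using U_le[OF assms(1,2)] by simp
qed

lemma positive_increments_eq_L:
  assumes "0 \<le> t" "0 < n"
    and fine: "\<And>v w. v \<in> {0..t} \<Longrightarrow> w \<in> {0..t} \<Longrightarrow> \<bar>v - w\<bar> \<le> t / n \<Longrightarrow> \<bar>Z v - Z w\<bar> < b - a"
  shows "positive_increments (\<lambda>s. L s - U s) t n = L t"
proof -
  define p where "p i = t * real i / real n" for i
  have p_Suc: "p (Suc i) = p i + t / real n" for i
    by (simp add: p_def add_divide_distrib distrib_left)
  have "max 0 ((L (p (Suc i)) - U (p (Suc i))) - (L (p i) - U (p i))) = L (p (Suc i)) - L (p i)"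
    if "i < n" for i
  proof (rule positive_increment_eq_L_increment)
    have "{p i..p (Suc i)} \<subseteq> {0..t}"
      using grid_point_in[OF \<open>0 \<le> t\<close>, of i n] grid_point_in[OF \<open>0 \<le> t\<close>, of "Suc i" n] \<open>i < n\<close>
      by (auto simp: p_def)
    then show "0 \<le> p i" "p i \<le> p (Suc i)"
      using p_Suc[of i] \<open>0 \<le> t\<close> by auto
    fix v w
    assume "v \<in> {p i..p (Suc i)}" "w \<in> {p i..p (Suc i)}"
    then show "\<bar>Z v - Z w\<bar> < b - a"
      using fine[of v w] p_Suc[of i] \<open>{p i..p (Suc i)} \<subseteq> {0..t}\<close> by auto
  qed
  then have "positive_increments (\<lambda>s. L s - U s) t n = (\<Sum>i<n. L (p (Suc i)) - L (p i))"
    unfolding positive_increments_def p_def by (intro sum.cong) auto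
  also have "\<dots> = L (p n) - L (p 0)"
    by (rule sum_lessThan_telescope)
  also have "\<dots> = L t"
    using \<open>0 < n\<close> L_0 by (simp add: p_def)
  finally show ?thesis .
qed

lemma eventually_positive_increments_eq_L:
  assumes "0 \<le> t"
  shows "eventually (\<lambda>n. positive_increments (\<lambda>s. L s - U s) t n = L t) sequentially"
proof -
  have "uniformly_continuous_on {0..t} Z"
    by (intro compact_uniformly_continuous continuous_on_subset[OF Z_cont]) auto
  then obtain d where "0 < d"
    and d: "\<And>v w. v \<in> {0..t} \<Longrightarrow> w \<in> {0..t} \<Longrightarrow> dist v w < d \<Longrightarrow> dist (Z v) (Z w) < b - a"
    using a_less_b unfolding uniformly_continuous_on_def by (metis diff_gt_0_iff_gt)
  obtain n0 :: nat where "t / d < n0"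
    using reals_Archimedean2 by blast
  have "positive_increments (\<lambda>s. L s - U s) t n = L t" if "n0 < n" for n
  proof (rule positive_increments_eq_L[OF \<open>0 \<le> t\<close>])
    show "0 < n"
      using that by simp
    have "t < d * real n0"
      using \<open>t / d < n0\<close> \<open>0 < d\<close> by (simp add: field_simps)
    also have "\<dots> \<le> d * real n"
      using \<open>n0 < n\<close> \<open>0 < d\<close> by simp
    finally have "t / real n < d"
      using \<open>0 < n\<close> by (simp add: field_simps)
    then show "\<bar>Z v - Z w\<bar> < b - a" if "v \<in> {0..t}" "w \<in> {0..t}" "\<bar>v - w\<bar> \<le> t / n" for v w
      using d[OF that(1,2)] that(3) by (simp add: dist_real_def)
  qed
  then have "\<forall>n\<ge>Suc n0. positive_increments (\<lambda>s. L s - U s) t n = L t"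
    by simp
  then show ?thesis
    unfolding eventually_sequentially by blast
qed

end

lemma borel_measurable_skorokhod_net:
  fixes X :: "real \<Rightarrow> 'a \<Rightarrow> real"
  assumes "0 \<le> t"
    and meas: "\<And>u. u \<in> {0..t} \<Longrightarrow> X u \<in> borel_measurable M"
    and cont: "\<And>\<omega>. \<omega> \<in> space M \<Longrightarrow> continuous_on {0..t} (\<lambda>u. X u \<omega>)"
  shows "(\<lambda>\<omega>. skorokhod_net (\<lambda>u. X u \<omega>) a b t) \<in> borel_measurable M"
proof -
  have clamp_in: "clamp s t q \<in> {0..t}" if "0 \<le> s" "s \<le> t" for s q
    using that by (simp add: clamp_real)
  have "bdd_above ((\<lambda>q. min (a - X (clamp 0 t q) \<omega>) (INF q'\<in>\<rat>. b - X (clamp (clamp 0 t q) t q') \<omega>)) ` \<rat>)"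
    if "\<omega> \<in> space M" for \<omega>
  proof -
    have "bounded ((\<lambda>u. X u \<omega>) ` {0..t})"
      by (intro compact_imp_bounded compact_continuous_image cont that compact_Icc)
    then obtain B where B: "\<forall>u\<in>{0..t}. \<bar>X u \<omega>\<bar> \<le> B"
      unfolding bounded_iff by auto
    show ?thesis
    proof (rule bdd_aboveI2)
      fix q
      show "min (a - X (clamp 0 t q) \<omega>) (INF q'\<in>\<rat>. b - X (clamp (clamp 0 t q) t q') \<omega>) \<le> a + B"
        using B clamp_in[of 0 q] \<open>0 \<le> t\<close> by force
    qed
  qed
  then show ?thesis
    unfolding skorokhod_net_def using clamp_in \<open>0 \<le> t\<close>
    by (intro borel_measurable_max borel_measurable_min borel_measurable_const borel_measurable_diff
        borel_measurable_cINF_real borel_measurable_cSUP countable_rat meas) auto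
qed

lemma filtration_borel_measurable_mono:
  assumes F: "filtration \<Omega> F" and "s \<le> t" and f: "f \<in> borel_measurable (F s)"
  shows "f \<in> borel_measurable (F t)"
proof (rule measurable_from_subalg[OF _ f])
  show "subalgebra (F t) (F s)"
    unfolding subalgebra_def using filtration.sets_F_mono[OF F \<open>s \<le> t\<close>] filtration.space_F[OF F] by simp
qed

lemma two_sided_reflection_adapted:
  fixes X L U :: "real \<Rightarrow> 'a \<Rightarrow> real"
  assumes F: "filtration \<Omega> F"
    and refl: "\<And>\<omega>. \<omega> \<in> \<Omega> \<Longrightarrow> two_sided_reflection (\<lambda>t. X t \<omega>) (\<lambda>t. L t \<omega>) (\<lambda>t. U t \<omega>) a b"
    and X_adapted: "\<And>t. 0 \<le> t \<Longrightarrow> X t \<in> borel_measurable (F t)"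
    and "0 \<le> t"
  shows "L t \<in> borel_measurable (F t)" and "U t \<in> borel_measurable (F t)"
proof -
  note space = filtration.space_F[OF F]
  have net: "(\<lambda>\<omega>. L r \<omega> - U r \<omega>) \<in> borel_measurable (F t)" if r: "r \<in> {0..t}" for r
  proof -
    have "(\<lambda>\<omega>. skorokhod_net (\<lambda>u. X u \<omega>) a b r) \<in> borel_measurable (F r)"
    proof (rule borel_measurable_skorokhod_net)
      show "X u \<in> borel_measurable (F r)" if "u \<in> {0..r}" for u
        using that X_adapted[of u] by (auto intro: filtration_borel_measurable_mono[OF F, of u])
      show "continuous_on {0..r} (\<lambda>u. X u \<omega>)" if "\<omega> \<in> space (F r)" for \<omega>
      proof (rule continuous_on_subset)
        show "continuous_on {0..} (\<lambda>u. X u \<omega>)"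
          using that space two_sided_reflection.X_cont[OF refl] by simp
      qed auto
    qed (use r in simp)
    then have "(\<lambda>\<omega>. skorokhod_net (\<lambda>u. X u \<omega>) a b r) \<in> borel_measurable (F t)"
      using r by (simp add: filtration_borel_measurable_mono[OF F, of r t])
    moreover have "L r \<omega> - U r \<omega> = skorokhod_net (\<lambda>u. X u \<omega>) a b r" if "\<omega> \<in> space (F t)" for \<omega>
      using that space r two_sided_reflection.net_eq_skorokhod_net[OF refl] by simp
    ultimately show ?thesis
      by (rule measurable_cong[THEN iffD2, rotated])
  qed
  show L: "L t \<in> borel_measurable (F t)"
  proof (rule borel_measurable_LIMSEQ_real)
    show "(\<lambda>n. positive_increments (\<lambda>s. L s \<omega> - U s \<omega>) t n) \<longlonglongrightarrow> L t \<omega>" if "\<omega> \<in> space (F t)" for \<omega>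
      using two_sided_reflection.eventually_positive_increments_eq_L[OF refl \<open>0 \<le> t\<close>] that space
      by (simp add: tendsto_eventually)
    fix n :: nat
    have net_grid: "(\<lambda>\<omega>. L (t * real i / real n) \<omega> - U (t * real i / real n) \<omega>) \<in> borel_measurable (F t)"
      if "i \<le> n" for i
      using net grid_point_in[OF \<open>0 \<le> t\<close> that] by blast
    show "(\<lambda>\<omega>. positive_increments (\<lambda>s. L s \<omega> - U s \<omega>) t n) \<in> borel_measurable (F t)"
      unfolding positive_increments_def
      by (intro borel_measurable_sum borel_measurable_max borel_measurable_const
          borel_measurable_diff[OF net_grid net_grid]) auto
  qed
  have "(\<lambda>\<omega>. L t \<omega> - (L t \<omega> - U t \<omega>)) \<in> borel_measurable (F t)"
    using \<open>0 \<le> t\<close> by (intro borel_measurable_diff[OF L net]) simp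
  then show "U t \<in> borel_measurable (F t)"
    by simp
qed

section \<open>Predictability\<close>

text \<open>The grid point k/m with k/m < t \<le> (k+1)/m, and 0 for t \<le> 0.\<close>
definition left_grid :: "nat \<Rightarrow> real \<Rightarrow> real" where
  "left_grid m t = max 0 ((of_int \<lceil>real m * t\<rceil> - 1) / real m)"

lemma left_grid_eq:
  fixes m k :: nat
  assumes "0 < m" "real k / m < t" "t \<le> real (Suc k) / m"
  shows "left_grid m t = real k / m"
proof -
  have "real k < real m * t" "real m * t \<le> real k + 1"
    using assms by (auto simp: field_simps)
  then have "\<lceil>real m * t\<rceil> = int k + 1"
    by (subst ceiling_eq_iff) auto
  then show ?thesis
    by (simp add: left_grid_def)
qed

lemma left_grid_cases:
  fixes m :: nat
  assumes "0 < m" "0 \<le> t"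
  obtains "t = 0" "left_grid m t = 0"
    | k where "t \<in> {real k / m<..real (Suc k) / m}" "left_grid m t = real k / m"
proof (cases "t = 0")
  case True
  then show ?thesis
    using that(1) by (simp add: left_grid_def)
next
  case False
  define k where "k = nat (\<lceil>real m * t\<rceil> - 1)"
  have "1 \<le> \<lceil>real m * t\<rceil>"
    using assms False by (simp add: one_le_ceiling)
  then have "real k = of_int \<lceil>real m * t\<rceil> - 1"
    by (simp add: k_def)
  then have "real k / m < t" "t \<le> real (Suc k) / m"
    using assms ceiling_correct[of "real m * t"] by (auto simp: field_simps)
  then show ?thesis
    using that(2) left_grid_eq[OF \<open>0 < m\<close>] by simp
qed

lemma left_grid_bounds:
  assumes "0 \<le> t" "0 < m"
  shows "left_grid m t \<in> {0..t}" and "t - 1 / m \<le> left_grid m t"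
proof -
  have "of_int \<lceil>real m * t\<rceil> - 1 \<le> real m * t" "real m * t \<le> of_int \<lceil>real m * t\<rceil>"
    by linarith+
  then have "(of_int \<lceil>real m * t\<rceil> - 1) / real m \<le> t" "t - 1 / m \<le> (of_int \<lceil>real m * t\<rceil> - 1) / real m"
    using assms by (simp_all add: field_simps)
  then show "left_grid m t \<in> {0..t}" "t - 1 / m \<le> left_grid m t"
    using assms by (auto simp: left_grid_def)
qed

lemma left_grid_tendsto:
  assumes "0 \<le> t"
  shows "(\<lambda>n. left_grid (Suc n) t) \<longlonglongrightarrow> t"
proof (rule tendsto_sandwich)
  have "t - 1 / real (Suc n) \<le> left_grid (Suc n) t \<and> left_grid (Suc n) t \<le> t" for n
    using left_grid_bounds[OF assms, of "Suc n"] by simp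
  then show "eventually (\<lambda>n. t - 1 / real (Suc n) \<le> left_grid (Suc n) t) sequentially"
    "eventually (\<lambda>n. left_grid (Suc n) t \<le> t) sequentially"
    by (simp_all add: always_eventually)
  show "(\<lambda>n. t - 1 / real (Suc n)) \<longlonglongrightarrow> t"
    using tendsto_diff[OF tendsto_const LIMSEQ_inverse_real_of_nat] by (simp add: inverse_eq_divide)
qed simp

lemma
  assumes F: "filtration \<Omega> F"
  shows space_predictable_sigma: "space (predictable_sigma F \<Omega>) = {0..} \<times> \<Omega>"
    and predictable_sigma_zero: "A \<in> sets (F 0) \<Longrightarrow> {0} \<times> A \<in> sets (predictable_sigma F \<Omega>)"
    and predictable_sigma_interval:
      "0 \<le> s \<Longrightarrow> s \<le> t \<Longrightarrow> A \<in> sets (F s) \<Longrightarrow> {s<..t} \<times> A \<in> sets (predictable_sigma F \<Omega>)"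
proof -
  have "A \<subseteq> \<Omega>" if "A \<in> sets (F s)" for A s
    using sets.sets_into_space[OF that] filtration.space_F[OF F] by simp
  then have gen: "{{0} \<times> A | A. A \<in> sets (F 0)} \<union> {{s<..t} \<times> A | s t A. 0 \<le> s \<and> s \<le> t \<and> A \<in> sets (F s)}
      \<subseteq> Pow ({0..} \<times> \<Omega>)"
    by fastforce
  show "space (predictable_sigma F \<Omega>) = {0..} \<times> \<Omega>"
    unfolding predictable_sigma_def using gen by (rule space_measure_of)
  show "A \<in> sets (F 0) \<Longrightarrow> {0} \<times> A \<in> sets (predictable_sigma F \<Omega>)"
    unfolding predictable_sigma_def sets_measure_of[OF gen] by (intro sigma_sets.Basic) blast
  show "0 \<le> s \<Longrightarrow> s \<le> t \<Longrightarrow> A \<in> sets (F s) \<Longrightarrow> {s<..t} \<times> A \<in> sets (predictable_sigma F \<Omega>)"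
    unfolding predictable_sigma_def sets_measure_of[OF gen] by (intro sigma_sets.Basic) blast
qed

lemma predictable_left_grid:
  fixes X :: "real \<Rightarrow> 'a \<Rightarrow> real"
  assumes F: "filtration \<Omega> F" and adapted: "\<And>t. 0 \<le> t \<Longrightarrow> X t \<in> borel_measurable (F t)"
    and "0 < m"
  shows "(\<lambda>(t, \<omega>). X (left_grid m t) \<omega>) \<in> borel_measurable (predictable_sigma F \<Omega>)"
  unfolding borel_measurable_iff_le
proof
  fix c
  define A where "A r = {\<omega> \<in> \<Omega>. X r \<omega> \<le> c}" for r
  have A: "A r \<in> sets (F r)" if "0 \<le> r" for r
    using adapted[OF that] filtration.space_F[OF F] unfolding A_def borel_measurable_iff_le by metis
  have "{p \<in> space (predictable_sigma F \<Omega>). (case p of (t, \<omega>) \<Rightarrow> X (left_grid m t) \<omega>) \<le> c}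
      = {0} \<times> A 0 \<union> (\<Union>k. {real k / m<..real (Suc k) / m} \<times> A (real k / m))"
  proof (intro set_eqI iffI)
    fix p
    assume p: "p \<in> {p \<in> space (predictable_sigma F \<Omega>). (case p of (t, \<omega>) \<Rightarrow> X (left_grid m t) \<omega>) \<le> c}"
    obtain t \<omega> where p_eq: "p = (t, \<omega>)"
      by (cases p)
    then have "0 \<le> t" "\<omega> \<in> \<Omega>" "X (left_grid m t) \<omega> \<le> c"
      using p space_predictable_sigma[OF F] by auto
    then show "p \<in> {0} \<times> A 0 \<union> (\<Union>k. {real k / m<..real (Suc k) / m} \<times> A (real k / m))"
      using p_eq by (cases rule: left_grid_cases[OF \<open>0 < m\<close> \<open>0 \<le> t\<close>]) (auto simp: A_def)
  next
    fix p
    assume "p \<in> {0} \<times> A 0 \<union> (\<Union>k. {real k / m<..real (Suc k) / m} \<times> A (real k / m))"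
    moreover have "0 \<le> t" if "real k / m < t" for k t
      using that divide_nonneg_nonneg[of "real k" "real m"] by linarith
    ultimately show "p \<in> {p \<in> space (predictable_sigma F \<Omega>). (case p of (t, \<omega>) \<Rightarrow> X (left_grid m t) \<omega>) \<le> c}"
      using left_grid_eq[OF \<open>0 < m\<close>] space_predictable_sigma[OF F]
      by (auto simp: A_def left_grid_def)
  qed
  also have "\<dots> \<in> sets (predictable_sigma F \<Omega>)"
  proof -
    have "{real k / m<..real (Suc k) / m} \<times> A (real k / m) \<in> sets (predictable_sigma F \<Omega>)" for k
    proof (rule predictable_sigma_interval[OF F])
      show "0 \<le> real k / m" "real k / m \<le> real (Suc k) / m"
        by (simp_all add: divide_right_mono)
    qed (simp add: A)
    then show ?thesis
      using predictable_sigma_zero[OF F A[of 0]] by (intro sets.Un sets.countable_UN) auto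
  qed
  finally show "{p \<in> space (predictable_sigma F \<Omega>). (case p of (t, \<omega>) \<Rightarrow> X (left_grid m t) \<omega>) \<le> c}
      \<in> sets (predictable_sigma F \<Omega>)" .
qed

lemma predictable_if_continuous_adapted:
  fixes X :: "real \<Rightarrow> 'a \<Rightarrow> real"
  assumes F: "filtration \<Omega> F"
    and cont: "\<And>\<omega>. \<omega> \<in> \<Omega> \<Longrightarrow> continuous_on {0..} (\<lambda>t. X t \<omega>)"
    and adapted: "\<And>t. 0 \<le> t \<Longrightarrow> X t \<in> borel_measurable (F t)"
  shows "predictable F \<Omega> X"
  unfolding predictable_def
proof (rule borel_measurable_LIMSEQ_real)
  show "(\<lambda>n. (\<lambda>(t, \<omega>). X (left_grid (Suc n) t) \<omega>) p) \<longlonglongrightarrow> (\<lambda>(t, \<omega>). X t \<omega>) p"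
    if "p \<in> space (predictable_sigma F \<Omega>)" for p
  proof -
    obtain t \<omega> where p: "p = (t, \<omega>)"
      by (cases p)
    then have "0 \<le> t" "\<omega> \<in> \<Omega>"
      using that space_predictable_sigma[OF F] by auto
    have "(\<lambda>n. X (left_grid (Suc n) t) \<omega>) \<longlonglongrightarrow> X t \<omega>"
      using left_grid_bounds(1)[OF \<open>0 \<le> t\<close>] \<open>0 \<le> t\<close>
      by (intro continuous_on_tendsto_compose[OF cont[OF \<open>\<omega> \<in> \<Omega>\<close>] left_grid_tendsto]) auto
    then show ?thesis
      using p by simp
  qed
  show "(\<lambda>(t, \<omega>). X (left_grid (Suc n) t) \<omega>) \<in> borel_measurable (predictable_sigma F \<Omega>)" for n
    by (rule predictable_left_grid[OF F adapted]) simp_all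
qed

lemma predictable_log_linear:
  fixes f G H :: "real \<Rightarrow> 'a \<Rightarrow> real"
  assumes F: "filtration \<Omega> F"
    and f_pos: "\<And>t \<omega>. \<omega> \<in> \<Omega> \<Longrightarrow> 0 \<le> t \<Longrightarrow> 0 < f t \<omega>"
    and ln_f: "\<And>t \<omega>. \<omega> \<in> \<Omega> \<Longrightarrow> 0 \<le> t \<Longrightarrow> ln (f t \<omega>) = c + p * G t \<omega> - q * H t \<omega>"
    and G_cont: "\<And>\<omega>. \<omega> \<in> \<Omega> \<Longrightarrow> continuous_on {0..} (\<lambda>t. G t \<omega>)"
    and H_cont: "\<And>\<omega>. \<omega> \<in> \<Omega> \<Longrightarrow> continuous_on {0..} (\<lambda>t. H t \<omega>)"
    and G_adapted: "\<And>t. 0 \<le> t \<Longrightarrow> G t \<in> borel_measurable (F t)"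
    and H_adapted: "\<And>t. 0 \<le> t \<Longrightarrow> H t \<in> borel_measurable (F t)"
  shows "predictable F \<Omega> f"
proof (rule predictable_if_continuous_adapted[OF F])
  have f_eq: "f t \<omega> = exp (c + p * G t \<omega> - q * H t \<omega>)" if "\<omega> \<in> \<Omega>" "0 \<le> t" for t \<omega>
    using ln_f[OF that] f_pos[OF that] by (metis exp_ln)
  show "continuous_on {0..} (\<lambda>t. f t \<omega>)" if "\<omega> \<in> \<Omega>" for \<omega>
  proof -
    have "continuous_on {0..} (\<lambda>t. exp (c + p * G t \<omega> - q * H t \<omega>))"
      using G_cont[OF that] H_cont[OF that] by (intro continuous_intros)
    then show ?thesis
      by (rule continuous_on_cong[THEN iffD1, OF refl, rotated]) (simp add: f_eq that)
  qed
  show "f t \<in> borel_measurable (F t)" if "0 \<le> t" for t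
  proof -
    have "(\<lambda>\<omega>. exp (c + p * G t \<omega> - q * H t \<omega>)) \<in> borel_measurable (F t)"
      using G_adapted[OF that] H_adapted[OF that] by measurable
    moreover have "f t \<omega> = exp (c + p * G t \<omega> - q * H t \<omega>)" if "\<omega> \<in> space (F t)" for \<omega>
      using f_eq \<open>0 \<le> t\<close> that filtration.space_F[OF F] by simp
    ultimately show ?thesis
      by (rule measurable_cong[THEN iffD2, rotated])
  qed
qed

section \<open>The G3M pool\<close>

lemma g3m_regulator_coefficients:
  fixes w \<gamma> D :: real
  assumes "0 < w" "w < 1" "0 < \<gamma>"
  shows "D = (1 - w) / (1 - w + \<gamma> * w) * (D + \<gamma> * w / (1 - w) * D)"
    and "\<gamma> * w / (1 - w) * D = \<gamma> * w / (1 - w + \<gamma> * w) * (D + \<gamma> * w / (1 - w) * D)"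
    and "D = \<gamma> * (1 - w) / (\<gamma> * (1 - w) + w) * (D + w / (\<gamma> * (1 - w)) * D)"
    and "w / (\<gamma> * (1 - w)) * D = w / (\<gamma> * (1 - w) + w) * (D + w / (\<gamma> * (1 - w)) * D)"
proof -
  have "0 < \<gamma> * w" "0 < \<gamma> * (1 - w)"
    using assms by simp_all
  then have nz: "1 - w \<noteq> 0" "1 - w + \<gamma> * w \<noteq> 0" "\<gamma> * (1 - w) + w \<noteq> 0" "\<gamma> * (1 - w) \<noteq> 0"
    using assms by linarith+
  have e1: "D + \<gamma> * w / (1 - w) * D = (1 - w + \<gamma> * w) / (1 - w) * D"
    using nz by (simp add: field_simps)
  have e2: "D + w / (\<gamma> * (1 - w)) * D = (\<gamma> * (1 - w) + w) / (\<gamma> * (1 - w)) * D"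
    using nz by (simp add: field_simps)
  show "D = (1 - w) / (1 - w + \<gamma> * w) * (D + \<gamma> * w / (1 - w) * D)"
    and "\<gamma> * w / (1 - w) * D = \<gamma> * w / (1 - w + \<gamma> * w) * (D + \<gamma> * w / (1 - w) * D)"
    and "D = \<gamma> * (1 - w) / (\<gamma> * (1 - w) + w) * (D + w / (\<gamma> * (1 - w)) * D)"
    and "w / (\<gamma> * (1 - w)) * D = w / (\<gamma> * (1 - w) + w) * (D + w / (\<gamma> * (1 - w)) * D)"
    unfolding e1 e2 using nz by simp_all
qed

lemma g3m_log_price_ratio:
  fixes w \<gamma> x0 y0 x y S Ds Dp :: real
  assumes "0 < w" "w < 1" "0 < x0" "0 < y0" "0 < x" "0 < y" "0 < S"
    and "ln x = ln x0 + Ds - Dp"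
    and "ln y = ln y0 - \<gamma> * w / (1 - w) * Ds + w / (\<gamma> * (1 - w)) * Dp"
  shows "ln (S / (w / (1 - w) * y / x))
    = ln S - ln (w / (1 - w) * y0 / x0) + (Ds + \<gamma> * w / (1 - w) * Ds) - (Dp + w / (\<gamma> * (1 - w)) * Dp)"
proof -
  have "0 < w / (1 - w)"
    using assms by simp
  then have ln_P: "ln (w / (1 - w) * u / v) = ln (w / (1 - w)) + ln u - ln v" if "0 < u" "0 < v" for u v
    using that assms(1,2) by (simp add: ln_mult ln_div)
  have "0 < w / (1 - w) * y / x"
    using \<open>0 < w / (1 - w)\<close> assms by simp
  moreover have "ln (S / Q) = ln S - ln Q" if "0 < Q" for Q
    using \<open>0 < S\<close> that by (simp add: ln_div)
  ultimately have "ln (S / (w / (1 - w) * y / x)) = ln S - ln (w / (1 - w) * y / x)"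
    by blast
  also have "\<dots> = ln S - (ln (w / (1 - w)) + ln y - ln x)"
    unfolding ln_P[OF \<open>0 < y\<close> \<open>0 < x\<close>] ..
  finally show ?thesis
    using ln_P[OF \<open>0 < y0\<close> \<open>0 < x0\<close>] assms(8,9) by linarith
qed

locale g3m_arbitrage =
  fixes F :: "real \<Rightarrow> 'a measure" and \<Omega> :: "'a set"
    and w \<gamma> x0 y0 :: real
    and S x y P Z L U Ds Dp :: "real \<Rightarrow> 'a \<Rightarrow> real"
  assumes F: "filtration \<Omega> F"
    and w: "0 < w" "w < 1" and gamma: "0 < \<gamma>" "\<gamma> < 1"
    and x0: "0 < x0" and y0: "0 < y0"
    and S_pos: "\<And>t \<omega>. \<omega> \<in> \<Omega> \<Longrightarrow> 0 \<le> t \<Longrightarrow> 0 < S t \<omega>"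
    and S_cont: "\<And>\<omega>. \<omega> \<in> \<Omega> \<Longrightarrow> continuous_on {0..} (\<lambda>t. S t \<omega>)"
    and S_adapted: "\<And>t. 0 \<le> t \<Longrightarrow> S t \<in> borel_measurable (F t)"
    and xy_pos: "\<And>t \<omega>. \<omega> \<in> \<Omega> \<Longrightarrow> 0 \<le> t \<Longrightarrow> 0 < x t \<omega> \<and> 0 < y t \<omega>"
    and P_def: "\<And>t \<omega>. \<omega> \<in> \<Omega> \<Longrightarrow> 0 \<le> t \<Longrightarrow> P t \<omega> = w / (1 - w) * y t \<omega> / x t \<omega>"
    and lnx: "\<And>t \<omega>. \<omega> \<in> \<Omega> \<Longrightarrow> 0 \<le> t \<Longrightarrow> ln (x t \<omega>) = ln x0 + Ds t \<omega> - Dp t \<omega>"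
    and lny: "\<And>t \<omega>. \<omega> \<in> \<Omega> \<Longrightarrow> 0 \<le> t \<Longrightarrow>
      ln (y t \<omega>) = ln y0 - \<gamma> * w / (1 - w) * Ds t \<omega> + w / (\<gamma> * (1 - w)) * Dp t \<omega>"
    and L_def: "\<And>t \<omega>. \<omega> \<in> \<Omega> \<Longrightarrow> 0 \<le> t \<Longrightarrow> L t \<omega> = Ds t \<omega> + \<gamma> * w / (1 - w) * Ds t \<omega>"
    and U_def: "\<And>t \<omega>. \<omega> \<in> \<Omega> \<Longrightarrow> 0 \<le> t \<Longrightarrow> U t \<omega> = Dp t \<omega> + w / (\<gamma> * (1 - w)) * Dp t \<omega>"
    and Z_def: "\<And>t \<omega>. \<omega> \<in> \<Omega> \<Longrightarrow> 0 \<le> t \<Longrightarrow> Z t \<omega> = ln (S t \<omega> / P t \<omega>)"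
    and LU_cont: "\<And>\<omega>. \<omega> \<in> \<Omega> \<Longrightarrow>
      continuous_on {0..} (\<lambda>t. L t \<omega>) \<and> continuous_on {0..} (\<lambda>t. U t \<omega>)"
    and LU_mono: "\<And>\<omega>. \<omega> \<in> \<Omega> \<Longrightarrow> mono_on {0..} (\<lambda>t. L t \<omega>) \<and> mono_on {0..} (\<lambda>t. U t \<omega>)"
    and LU0: "\<And>\<omega>. \<omega> \<in> \<Omega> \<Longrightarrow> L 0 \<omega> = 0 \<and> U 0 \<omega> = 0"
    and Z_band: "\<And>t \<omega>. \<omega> \<in> \<Omega> \<Longrightarrow> 0 \<le> t \<Longrightarrow> ln \<gamma> \<le> Z t \<omega> \<and> Z t \<omega> \<le> - ln \<gamma>"
    and L_only: "\<And>\<omega>. \<omega> \<in> \<Omega> \<Longrightarrow> increases_only_when (\<lambda>t. L t \<omega>) (\<lambda>t. Z t \<omega>) (ln \<gamma>)"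
    and U_only: "\<And>\<omega>. \<omega> \<in> \<Omega> \<Longrightarrow> increases_only_when (\<lambda>t. U t \<omega>) (\<lambda>t. Z t \<omega>) (- ln \<gamma>)"
begin

definition driver :: "real \<Rightarrow> 'a \<Rightarrow> real" where
  "driver t \<omega> = ln (S t \<omega>) - ln (w / (1 - w) * y0 / x0)"

lemma
  assumes "\<omega> \<in> \<Omega>" "0 \<le> t"
  shows ln_x_eq: "ln (x t \<omega>) = ln x0 + (1 - w) / (1 - w + \<gamma> * w) * L t \<omega>
      - \<gamma> * (1 - w) / (\<gamma> * (1 - w) + w) * U t \<omega>"
    and ln_y_eq: "ln (y t \<omega>) = ln y0 + w / (\<gamma> * (1 - w) + w) * U t \<omega>
      - \<gamma> * w / (1 - w + \<gamma> * w) * L t \<omega>"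
  using lnx[OF assms] lny[OF assms] g3m_regulator_coefficients[OF w gamma(1), of "Ds t \<omega>"]
    g3m_regulator_coefficients[OF w gamma(1), of "Dp t \<omega>"]
  unfolding L_def[OF assms] U_def[OF assms] by linarith+

lemma Z_eq_driver: "\<omega> \<in> \<Omega> \<Longrightarrow> 0 \<le> t \<Longrightarrow> Z t \<omega> = driver t \<omega> + L t \<omega> - U t \<omega>"
  unfolding Z_def P_def L_def U_def driver_def
  using g3m_log_price_ratio[OF w x0 y0 _ _ S_pos lnx lny] xy_pos by blast

lemma reflection:
  assumes "\<omega> \<in> \<Omega>"
  shows "two_sided_reflection (\<lambda>t. driver t \<omega>) (\<lambda>t. L t \<omega>) (\<lambda>t. U t \<omega>) (ln \<gamma>) (- ln \<gamma>)"
proof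
  show "ln \<gamma> < - ln \<gamma>"
    using gamma by simp
  have "\<forall>t\<in>{0..}. S t \<omega> \<noteq> 0"
    using S_pos[OF assms] by (metis atLeast_iff order_less_irrefl)
  then show "continuous_on {0..} (\<lambda>t. driver t \<omega>)"
    unfolding driver_def using S_cont[OF assms] by (intro continuous_intros)
  have "increases_only_when f (\<lambda>t. driver t \<omega> + L t \<omega> - U t \<omega>) c \<longleftrightarrow> increases_only_when f (\<lambda>t. Z t \<omega>) c"
    for f c
    using Z_eq_driver[OF assms] by (intro increases_only_when_cong) simp
  then show "increases_only_when (\<lambda>t. L t \<omega>) (\<lambda>t. driver t \<omega> + L t \<omega> - U t \<omega>) (ln \<gamma>)"
    "increases_only_when (\<lambda>t. U t \<omega>) (\<lambda>t. driver t \<omega> + L t \<omega> - U t \<omega>) (- ln \<gamma>)"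
    using L_only[OF assms] U_only[OF assms] by simp_all
  show "ln \<gamma> \<le> driver t \<omega> + L t \<omega> - U t \<omega> \<and> driver t \<omega> + L t \<omega> - U t \<omega> \<le> - ln \<gamma>"
    if "0 \<le> t" for t
    using Z_band[OF assms that] Z_eq_driver[OF assms that] by simp
qed (use LU_cont[OF assms] LU_mono[OF assms] LU0[OF assms] in simp_all)

lemma
  assumes "0 \<le> t"
  shows L_adapted: "L t \<in> borel_measurable (F t)" and U_adapted: "U t \<in> borel_measurable (F t)"
proof -
  have "driver t \<in> borel_measurable (F t)" if "0 \<le> t" for t
    unfolding driver_def[abs_def]
    by (intro borel_measurable_diff borel_measurable_ln borel_measurable_const S_adapted that)
  then show "L t \<in> borel_measurable (F t)" "U t \<in> borel_measurable (F t)"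
    using two_sided_reflection_adapted[where X = driver and L = L and U = U, OF F reflection _ assms]
    by blast+
qed

lemma
  shows predictable_x: "predictable F \<Omega> x" and predictable_y: "predictable F \<Omega> y"
  using xy_pos LU_cont L_adapted U_adapted
  by (auto intro!: predictable_log_linear[OF F _ ln_x_eq] predictable_log_linear[OF F _ ln_y_eq])

lemma coefficients_pos:
  "0 < (1 - w) / (1 - w + \<gamma> * w)" "0 < \<gamma> * (1 - w) / (\<gamma> * (1 - w) + w)"
  "0 < w / (\<gamma> * (1 - w) + w)" "0 < \<gamma> * w / (1 - w + \<gamma> * w)"
  using w gamma by (simp_all add: add_pos_pos)

lemma
  assumes "\<omega> \<in> \<Omega>"
  shows x_path_properties:
      "increases_only_when (\<lambda>t. x t \<omega>) (\<lambda>t. Z t \<omega>) (ln \<gamma>)"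
      "decreases_only_when (\<lambda>t. x t \<omega>) (\<lambda>t. Z t \<omega>) (- ln \<gamma>)"
      "continuous_on {0..} (\<lambda>t. ln (x t \<omega>))"
      "\<And>a b. 0 \<le> a \<Longrightarrow> bounded_variation_on (\<lambda>t. ln (x t \<omega>)) a b"
    and y_path_properties:
      "increases_only_when (\<lambda>t. y t \<omega>) (\<lambda>t. Z t \<omega>) (- ln \<gamma>)"
      "decreases_only_when (\<lambda>t. y t \<omega>) (\<lambda>t. Z t \<omega>) (ln \<gamma>)"
      "continuous_on {0..} (\<lambda>t. ln (y t \<omega>))"
      "\<And>a b. 0 \<le> a \<Longrightarrow> bounded_variation_on (\<lambda>t. ln (y t \<omega>)) a b"
proof -
  have pos: "\<And>t. 0 \<le> t \<Longrightarrow> 0 < x t \<omega>" "\<And>t. 0 \<le> t \<Longrightarrow> 0 < y t \<omega>"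
    using xy_pos[OF assms] by simp_all
  have L: "continuous_on {0..} (\<lambda>t. L t \<omega>)" "mono_on {0..} (\<lambda>t. L t \<omega>)"
    and U: "continuous_on {0..} (\<lambda>t. U t \<omega>)" "mono_on {0..} (\<lambda>t. U t \<omega>)"
    using LU_cont[OF assms] LU_mono[OF assms] by simp_all
  note x = log_linear_path_properties[OF pos(1) ln_x_eq[OF assms] coefficients_pos(1,2) L U
      L_only[OF assms] U_only[OF assms]]
  note y = log_linear_path_properties[OF pos(2) ln_y_eq[OF assms] coefficients_pos(3,4) U L
      U_only[OF assms] L_only[OF assms]]
  show "increases_only_when (\<lambda>t. x t \<omega>) (\<lambda>t. Z t \<omega>) (ln \<gamma>)"
      "decreases_only_when (\<lambda>t. x t \<omega>) (\<lambda>t. Z t \<omega>) (- ln \<gamma>)"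
      "continuous_on {0..} (\<lambda>t. ln (x t \<omega>))"
      "\<And>a b. 0 \<le> a \<Longrightarrow> bounded_variation_on (\<lambda>t. ln (x t \<omega>)) a b"
    using x by blast+
  show "increases_only_when (\<lambda>t. y t \<omega>) (\<lambda>t. Z t \<omega>) (- ln \<gamma>)"
      "decreases_only_when (\<lambda>t. y t \<omega>) (\<lambda>t. Z t \<omega>) (ln \<gamma>)"
      "continuous_on {0..} (\<lambda>t. ln (y t \<omega>))"
      "\<And>a b. 0 \<le> a \<Longrightarrow> bounded_variation_on (\<lambda>t. ln (y t \<omega>)) a b"
    using y by blast+
qed

end

theorem mainTheorem3:
  fixes M :: "'a measure" and F :: "real \<Rightarrow> 'a measure"
    and w \<gamma> x0 y0 :: real
    and S x y P Z L U Ds Dp :: "real \<Rightarrow> 'a \<Rightarrow> real"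
  assumes M: "prob_space M"
    and F: "filtration (space M) F" and F_sub: "\<And>t. sets (F t) \<subseteq> sets M"
    and w: "0 < w" "w < 1" and gamma: "0 < \<gamma>" "\<gamma> < 1"
    and x0: "0 < x0" and y0: "0 < y0"
    \<comment> \<open>reference price: positive, continuous paths, adapted\<close>
    and S_pos: "\<And>t \<omega>. \<omega> \<in> space M \<Longrightarrow> 0 \<le> t \<Longrightarrow> 0 < S t \<omega>"
    and S_cont: "\<And>\<omega>. \<omega> \<in> space M \<Longrightarrow> continuous_on {0..} (\<lambda>t. S t \<omega>)"
    and S_adapted: "\<And>t. 0 \<le> t \<Longrightarrow> S t \<in> borel_measurable (F t)"
    \<comment> \<open>initial reserves and initial band condition, with P_0 = w/(1-w) y_0/x_0\<close>
    and init: "\<And>\<omega>. \<omega> \<in> space M \<Longrightarrow> x 0 \<omega> = x0 \<and> y 0 \<omega> = y0"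
    and S0: "\<And>\<omega>. \<omega> \<in> space M \<Longrightarrow>
               \<gamma> * (w / (1 - w) * y0 / x0) \<le> S 0 \<omega> \<and> S 0 \<omega> \<le> (w / (1 - w) * y0 / x0) / \<gamma>"
    \<comment> \<open>reserves positive, pool price\<close>
    and xy_pos: "\<And>t \<omega>. \<omega> \<in> space M \<Longrightarrow> 0 \<le> t \<Longrightarrow> 0 < x t \<omega> \<and> 0 < y t \<omega>"
    and P_def: "\<And>t \<omega>. \<omega> \<in> space M \<Longrightarrow> 0 \<le> t \<Longrightarrow> P t \<omega> = w / (1 - w) * y t \<omega> / x t \<omega>"
    \<comment> \<open>reserves change only through trades (no noise traders): Ds = cumulative increase of
        ln x through sales of X to the pool (rule gamma w dx/x + (1-w) dy/y = 0),
        Dp = cumulative decrease of ln x through purchases of X from the pool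
        (rule w dx/x + gamma (1-w) dy/y = 0)\<close>
    and Ds_mono: "\<And>\<omega>. \<omega> \<in> space M \<Longrightarrow> mono_on {0..} (\<lambda>t. Ds t \<omega>)"
    and Dp_mono: "\<And>\<omega>. \<omega> \<in> space M \<Longrightarrow> mono_on {0..} (\<lambda>t. Dp t \<omega>)"
    and D0: "\<And>\<omega>. \<omega> \<in> space M \<Longrightarrow> Ds 0 \<omega> = 0 \<and> Dp 0 \<omega> = 0"
    and lnx: "\<And>t \<omega>. \<omega> \<in> space M \<Longrightarrow> 0 \<le> t \<Longrightarrow>
               ln (x t \<omega>) = ln x0 + Ds t \<omega> - Dp t \<omega>"
    and lny: "\<And>t \<omega>. \<omega> \<in> space M \<Longrightarrow> 0 \<le> t \<Longrightarrow>
               ln (y t \<omega>) = ln y0 - \<gamma> * w / (1 - w) * Ds t \<omega> + w / (\<gamma> * (1 - w)) * Dp t \<omega>"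
    \<comment> \<open>L = cumulative decrease of ln P due to (arbitrage) sales,
        U = cumulative increase of ln P due to (arbitrage) purchases\<close>
    and L_def: "\<And>t \<omega>. \<omega> \<in> space M \<Longrightarrow> 0 \<le> t \<Longrightarrow>
               L t \<omega> = Ds t \<omega> + \<gamma> * w / (1 - w) * Ds t \<omega>"
    and U_def: "\<And>t \<omega>. \<omega> \<in> space M \<Longrightarrow> 0 \<le> t \<Longrightarrow>
               U t \<omega> = Dp t \<omega> + w / (\<gamma> * (1 - w)) * Dp t \<omega>"
    \<comment> \<open>continuous instantaneous arbitrage: Skorokhod reflection of Z in [ln gamma, - ln gamma]\<close>
    and Z_def: "\<And>t \<omega>. \<omega> \<in> space M \<Longrightarrow> 0 \<le> t \<Longrightarrow> Z t \<omega> = ln (S t \<omega> / P t \<omega>)"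
    and LU_cont: "\<And>\<omega>. \<omega> \<in> space M \<Longrightarrow>
               continuous_on {0..} (\<lambda>t. L t \<omega>) \<and> continuous_on {0..} (\<lambda>t. U t \<omega>)"
    and LU_mono: "\<And>\<omega>. \<omega> \<in> space M \<Longrightarrow>
               mono_on {0..} (\<lambda>t. L t \<omega>) \<and> mono_on {0..} (\<lambda>t. U t \<omega>)"
    and LU0: "\<And>\<omega>. \<omega> \<in> space M \<Longrightarrow> L 0 \<omega> = 0 \<and> U 0 \<omega> = 0"
    and Z_band: "\<And>t \<omega>. \<omega> \<in> space M \<Longrightarrow> 0 \<le> t \<Longrightarrow> ln \<gamma> \<le> Z t \<omega> \<and> Z t \<omega> \<le> - ln \<gamma>"
    and L_only: "\<And>\<omega>. \<omega> \<in> space M \<Longrightarrow> increases_only_when (\<lambda>t. L t \<omega>) (\<lambda>t. Z t \<omega>) (ln \<gamma>)"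
    and U_only: "\<And>\<omega>. \<omega> \<in> space M \<Longrightarrow> increases_only_when (\<lambda>t. U t \<omega>) (\<lambda>t. Z t \<omega>) (- ln \<gamma>)"
  shows
    \<comment> \<open>(a)\<close>
    "(predictable F (space M) x \<and> predictable F (space M) y) \<and>
     (\<forall>\<omega>\<in>space M.
        \<comment> \<open>(b)\<close>
        (increases_only_when (\<lambda>t. x t \<omega>) (\<lambda>t. Z t \<omega>) (ln \<gamma>) \<and>
         decreases_only_when (\<lambda>t. x t \<omega>) (\<lambda>t. Z t \<omega>) (- ln \<gamma>) \<and>
         increases_only_when (\<lambda>t. y t \<omega>) (\<lambda>t. Z t \<omega>) (- ln \<gamma>) \<and>
         decreases_only_when (\<lambda>t. y t \<omega>) (\<lambda>t. Z t \<omega>) (ln \<gamma>)) \<and>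
        \<comment> \<open>(c)\<close>
        (continuous_on {0..} (\<lambda>t. ln (x t \<omega>)) \<and> continuous_on {0..} (\<lambda>t. ln (y t \<omega>)) \<and>
         (\<forall>a b. 0 \<le> a \<longrightarrow> a \<le> b \<longrightarrow>
            bounded_variation_on (\<lambda>t. ln (x t \<omega>)) a b \<and>
            bounded_variation_on (\<lambda>t. ln (y t \<omega>)) a b)) \<and>
        \<comment> \<open>(d), in integrated form\<close>
        (\<forall>t\<ge>0.
           ln (x t \<omega>) = ln x0 + (1 - w) / (1 - w + \<gamma> * w) * L t \<omega>
                                - \<gamma> * (1 - w) / (\<gamma> * (1 - w) + w) * U t \<omega> \<and>
           ln (y t \<omega>) = ln y0 + w / (\<gamma> * (1 - w) + w) * U t \<omega>
                                - \<gamma> * w / (1 - w + \<gamma> * w) * L t \<omega>))"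
proof -
  interpret g3m_arbitrage F "space M" w \<gamma> x0 y0 S x y P Z L U Ds Dp
    by (rule g3m_arbitrage.intro) (fact assms)+
  show ?thesis
    by (intro conjI ballI allI impI predictable_x predictable_y x_path_properties y_path_properties
        ln_x_eq ln_y_eq)
qed

end
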